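(* For any $0\le\epsilon<1$ and any integer $m>1$, $$\rho\Big((1-\epsilon)|\Psi\rangle\langle\Psi|+\epsilon\,\frac{\mathrm{id}_m}{m}\otimes\frac{\mathrm{id}_m}{m}\Big)=1-\epsilon,$$ where $|\Psi\rangle=\frac1{\sqrt m}\sum_{i=0}^{m-1}|i,i\rangle$ is the $m$-dimensional maximally entangled state.
   Context: For a bipartite state $\psi_{AB}$ on $\mathbb{C}^{m}\otimes\mathbb{C}^{m}$ with $\psi_A=\psi_B=\mathrm{id}_m/m$, its maximal correlation is $\rho(\psi_{AB})=\sup\{|\mathrm{Tr}((P^\dagger\otimes Q)\psi_{AB})|: P,Q\in\mathcal{M}_m,\ \mathrm{Tr}P=\mathrm{Tr}Q=0,\ \tfrac1m\mathrm{Tr}P^\dagger P=\tfrac1m\mathrm{Tr}Q^\dagger Q=1\}$, where $\mathcal{M}_m$ is the space of complex $m\times m$ matrices. *)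

theory Defs
  imports Complex_Main "Jordan_Normal_Form.Matrix"
begin

definition adj :: "complex mat \<Rightarrow> complex mat" where
  "adj A = mat (dim_col A) (dim_row A) (\<lambda>(i,j). cnj (A $$ (j,i)))"

text \<open>Kronecker (tensor) product; basis index i * dim + j corresponds to |i> (x) |j>.\<close>
definition kron :: "complex mat \<Rightarrow> complex mat \<Rightarrow> complex mat" where
  "kron A B = mat (dim_row A * dim_row B) (dim_col A * dim_col B)
     (\<lambda>(i,j). A $$ (i div dim_row B, j div dim_col B) * B $$ (i mod dim_row B, j mod dim_col B))"

definition max_ent :: "nat \<Rightarrow> complex vec" where
  "max_ent m = vec (m * m) (\<lambda>k. if k div m = k mod m then complex_of_real (1 / sqrt (real m)) else 0)"

definition proj :: "complex vec \<Rightarrow> complex mat" where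
  "proj v = mat (dim_vec v) (dim_vec v) (\<lambda>(i,j). v $ i * cnj (v $ j))"

definition mtrace :: "complex mat \<Rightarrow> complex" where
  "mtrace A = (\<Sum>i<dim_row A. A $$ (i,i))"

text \<open>Maximal correlation of a bipartite state on C^m (x) C^m (with maximally mixed marginals).\<close>
definition max_corr :: "nat \<Rightarrow> complex mat \<Rightarrow> real" where
  "max_corr m \<psi> = Sup {cmod (mtrace (kron (adj P) Q * \<psi>)) | P Q.
      P \<in> carrier_mat m m \<and> Q \<in> carrier_mat m m \<and> mtrace P = 0 \<and> mtrace Q = 0 \<and>
      mtrace (adj P * P) / of_nat m = 1 \<and> mtrace (adj Q * Q) / of_nat m = 1}"

end

theory Submission
  imports Defs
begin

(* Write psi_eps = (1 - eps) |Psi><Psi| + eps id/m^2. Tested against P^dagger (x) Q, the noise part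
   contributes eps conj(Tr P) Tr Q / m^2 = 0 since P is traceless, while <Psi| A (x) B |Psi> =
   (1/m) sum_{a,b} A_ab B_ab; so the correlation is (1 - eps)/m |sum_{a,b} (P^dagger)_ab Q_ab|.
   Entrywise AM-GM bounds that sum by half the sum of the squared Frobenius norms of P and Q, both
   equal to m after normalisation, giving the bound 1 - eps. It is attained by P = Q symmetric,
   traceless and normalised, e.g. sqrt(m/2) diag(1, -1, 0, ..., 0), which needs m > 1. *)

lemma sum_lessThan_mult:
  "(\<Sum>k<m * n. f k) = (\<Sum>a<m. \<Sum>b<n. f (a * n + b :: nat))"
proof (induction m)
  case 0
  then show ?case by simp
next
  case (Suc m)
  have "(\<Sum>k<Suc m * n. f k) = (\<Sum>k\<in>{0..<m * n + n}. f k)"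
    by (simp add: lessThan_atLeast0 add.commute)
  also have "\<dots> = (\<Sum>k\<in>{0..<m * n}. f k) + (\<Sum>k\<in>{m * n..<m * n + n}. f k)"
    by (rule sum.atLeastLessThan_concat[symmetric]) auto
  also have "(\<Sum>k\<in>{m * n..<m * n + n}. f k) = (\<Sum>b<n. f (m * n + b))"
    by (subst sum.atLeastLessThan_shift_0) (simp add: lessThan_atLeast0)
  finally show ?case
    using Suc by (simp add: lessThan_atLeast0)
qed

lemma mult_add_less_mult:
  fixes a b m n :: nat
  assumes "a < m" "b < n"
  shows "a * n + b < m * n"
proof -
  have "a * n + b < Suc a * n"
    using assms(2) by simp
  also have "\<dots> \<le> m * n"
    using assms(1) by (intro mult_right_mono) auto
  finally show ?thesis .
qed

lemma mtrace_mult: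
  assumes "A \<in> carrier_mat n k" "B \<in> carrier_mat k n"
  shows "mtrace (A * B) = (\<Sum>i<n. \<Sum>j<k. A $$ (i,j) * B $$ (j,i))"
  using assms by (auto simp: mtrace_def scalar_prod_def lessThan_atLeast0 intro!: sum.cong)

lemma mtrace_add:
  assumes "A \<in> carrier_mat n n" "B \<in> carrier_mat n n"
  shows "mtrace (A + B) = mtrace A + mtrace B"
  using assms by (simp add: mtrace_def sum.distrib)

lemma mtrace_smult: "A \<in> carrier_mat n n \<Longrightarrow> mtrace (c \<cdot>\<^sub>m A) = c * mtrace A"
  by (auto simp: mtrace_def sum_distrib_left intro!: sum.cong)

lemma adj_carrier_mat: "A \<in> carrier_mat n k \<Longrightarrow> adj A \<in> carrier_mat k n"
  by (simp add: adj_def)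

lemma index_adj: "A \<in> carrier_mat n k \<Longrightarrow> i < k \<Longrightarrow> j < n \<Longrightarrow> adj A $$ (i,j) = cnj (A $$ (j,i))"
  by (simp add: adj_def)

lemma mtrace_adj: "A \<in> carrier_mat n n \<Longrightarrow> mtrace (adj A) = cnj (mtrace A)"
  by (simp add: mtrace_def adj_def)

lemma kron_carrier_mat:
  "A \<in> carrier_mat n n' \<Longrightarrow> B \<in> carrier_mat k k' \<Longrightarrow> kron A B \<in> carrier_mat (n * k) (n' * k')"
  by (simp add: kron_def)

lemma index_kron:
  assumes "A \<in> carrier_mat n n'" "B \<in> carrier_mat k k'" "a < n" "b < k" "c < n'" "d < k'"
  shows "kron A B $$ (a * k + b, c * k' + d) = A $$ (a,c) * B $$ (b,d)"
  using assms by (simp add: kron_def mult_add_less_mult)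

lemma mtrace_kron:
  assumes "A \<in> carrier_mat n n" "B \<in> carrier_mat k k"
  shows "mtrace (kron A B) = mtrace A * mtrace B"
  using assms by (simp add: mtrace_def kron_def sum_lessThan_mult sum_product)

lemma kron_smult_one:
  "kron (c \<cdot>\<^sub>m 1\<^sub>m n) (d \<cdot>\<^sub>m 1\<^sub>m k) = (c * d) \<cdot>\<^sub>m 1\<^sub>m (n * k)"
proof (rule eq_matI)
  fix i j
  assume "i < dim_row ((c * d) \<cdot>\<^sub>m 1\<^sub>m (n * k))" "j < dim_col ((c * d) \<cdot>\<^sub>m 1\<^sub>m (n * k))"
  then have ij: "i < n * k" "j < n * k"
    by simp_all
  then have "0 < k"
    by (cases k) auto
  moreover have "i = j \<longleftrightarrow> i div k = j div k \<and> i mod k = j mod k"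
    by (metis div_mult_mod_eq)
  ultimately show "kron (c \<cdot>\<^sub>m 1\<^sub>m n) (d \<cdot>\<^sub>m 1\<^sub>m k) $$ (i, j) = ((c * d) \<cdot>\<^sub>m 1\<^sub>m (n * k)) $$ (i, j)"
    using ij by (auto simp: kron_def less_mult_imp_div_less mult.commute[of _ k])
qed (simp_all add: kron_def)

lemma mtrace_mult_proj:
  assumes "A \<in> carrier_mat n n" "dim_vec v = n"
  shows "mtrace (A * proj v) = (\<Sum>i<n. \<Sum>j<n. A $$ (i,j) * (v $ j * cnj (v $ i)))"
proof -
  have "proj v \<in> carrier_mat n n"
    using assms(2) by (simp add: proj_def)
  then show ?thesis
    using assms by (simp add: mtrace_mult proj_def)
qed

lemma dim_max_ent: "dim_vec (max_ent m) = m * m"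
  by (simp add: max_ent_def)

lemma index_max_ent:
  "a < m \<Longrightarrow> b < m \<Longrightarrow> max_ent m $ (a * m + b) = (if a = b then complex_of_real (1 / sqrt (real m)) else 0)"
  by (simp add: max_ent_def mult_add_less_mult)

lemma cnj_max_ent: "j < m * m \<Longrightarrow> cnj (max_ent m $ j) = max_ent m $ j"
  by (simp add: max_ent_def)

lemma sum_mult_max_ent:
  "(\<Sum>j<m * m. f j * max_ent m $ j) = complex_of_real (1 / sqrt (real m)) * (\<Sum>c<m. f (c * m + c))"
proof -
  let ?s = "complex_of_real (1 / sqrt (real m))"
  have "(\<Sum>j<m * m. f j * max_ent m $ j) = (\<Sum>a<m. \<Sum>b<m. if b = a then f (a * m + a) * ?s else 0)"
    unfolding sum_lessThan_mult by (intro sum.cong refl) (simp add: index_max_ent)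
  then show ?thesis
    by (simp add: sum.delta sum_distrib_left mult.commute)
qed

lemma mtrace_kron_mult_proj_max_ent:
  assumes "A \<in> carrier_mat m m" "B \<in> carrier_mat m m"
  shows "mtrace (kron A B * proj (max_ent m)) = (\<Sum>a<m. \<Sum>b<m. A $$ (a,b) * B $$ (a,b)) / of_nat m"
proof -
  let ?v = "max_ent m" and ?s = "complex_of_real (1 / sqrt (real m))"
  have "mtrace (kron A B * proj ?v) = (\<Sum>i<m * m. \<Sum>j<m * m. kron A B $$ (i,j) * (?v $ j * cnj (?v $ i)))"
    by (rule mtrace_mult_proj[OF kron_carrier_mat[OF assms] dim_max_ent])
  also have "\<dots> = (\<Sum>i<m * m. (\<Sum>j<m * m. kron A B $$ (i,j) * ?v $ j) * ?v $ i)"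
    unfolding sum_distrib_right by (intro sum.cong refl) (simp add: cnj_max_ent mult_ac)
  also have "\<dots> = ?s * (\<Sum>a<m. ?s * (\<Sum>b<m. kron A B $$ (a * m + a, b * m + b)))"
    by (simp only: sum_mult_max_ent)
  also have "\<dots> = ?s * ?s * (\<Sum>a<m. \<Sum>b<m. A $$ (a,b) * B $$ (a,b))"
    using assms by (simp add: index_kron sum_distrib_left mult_ac)
  also have "?s * ?s = 1 / of_nat m"
    by (simp flip: of_real_mult)
  finally show ?thesis
    by simp
qed

definition frobenius_norm_sq :: "complex mat \<Rightarrow> real" where
  "frobenius_norm_sq A = (\<Sum>i<dim_row A. \<Sum>j<dim_col A. (cmod (A $$ (i,j)))\<^sup>2)"

lemma mtrace_adj_mult_self:
  assumes "A \<in> carrier_mat n k"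
  shows "mtrace (adj A * A) = complex_of_real (frobenius_norm_sq A)"
proof -
  have "mtrace (adj A * A) = (\<Sum>i<k. \<Sum>j<n. cnj (A $$ (j,i)) * A $$ (j,i))"
    using assms by (simp add: mtrace_mult[OF adj_carrier_mat[OF assms] assms] index_adj)
  also have "\<dots> = (\<Sum>j<n. \<Sum>i<k. complex_of_real ((cmod (A $$ (j,i)))\<^sup>2))"
    by (subst sum.swap) (simp only: complex_norm_square mult.commute)
  finally show ?thesis
    using assms by (simp add: frobenius_norm_sq_def)
qed

lemma frobenius_norm_sq_adj:
  assumes "A \<in> carrier_mat n k"
  shows "frobenius_norm_sq (adj A) = frobenius_norm_sq A"
proof -
  have "frobenius_norm_sq (adj A) = (\<Sum>i<k. \<Sum>j<n. (cmod (A $$ (j,i)))\<^sup>2)"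
    using assms by (auto simp: frobenius_norm_sq_def adj_def intro!: sum.cong)
  also have "\<dots> = frobenius_norm_sq A"
    using assms by (simp add: frobenius_norm_sq_def sum.swap[where A = "{..<k}"])
  finally show ?thesis .
qed

lemma frobenius_norm_sq_eq_if_normalised:
  assumes "A \<in> carrier_mat m m" "mtrace (adj A * A) / of_nat m = 1"
  shows "frobenius_norm_sq A = real m"
proof -
  have "m \<noteq> 0"
    using assms(2) by (cases m) auto
  then have "complex_of_real (frobenius_norm_sq A) = of_nat m"
    using assms by (simp add: mtrace_adj_mult_self field_simps)
  then show ?thesis
    by (metis of_real_eq_iff of_real_of_nat_eq)
qed

lemma norm_mult_le_half_sum_squares: "cmod (z * w) \<le> ((cmod z)\<^sup>2 + (cmod w)\<^sup>2) / 2"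
proof -
  have "0 \<le> (cmod z - cmod w)\<^sup>2"
    by simp
  then show ?thesis
    by (simp add: norm_mult power2_eq_square algebra_simps)
qed

lemma cmod_sum_entrywise_mult_le:
  assumes "A \<in> carrier_mat n k" "B \<in> carrier_mat n k"
  shows "cmod (\<Sum>i<n. \<Sum>j<k. A $$ (i,j) * B $$ (i,j)) \<le> (frobenius_norm_sq A + frobenius_norm_sq B) / 2"
proof -
  have "cmod (\<Sum>i<n. \<Sum>j<k. A $$ (i,j) * B $$ (i,j)) \<le> (\<Sum>i<n. \<Sum>j<k. cmod (A $$ (i,j) * B $$ (i,j)))"
    by (rule order.trans[OF norm_sum sum_mono[OF norm_sum]])
  also have "\<dots> \<le> (\<Sum>i<n. \<Sum>j<k. ((cmod (A $$ (i,j)))\<^sup>2 + (cmod (B $$ (i,j)))\<^sup>2) / 2)"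
    by (intro sum_mono norm_mult_le_half_sum_squares)
  also have "\<dots> = (frobenius_norm_sq A + frobenius_norm_sq B) / 2"
    using assms by (simp add: frobenius_norm_sq_def sum.distrib sum_divide_distrib add_divide_distrib)
  finally show ?thesis .
qed

lemma sum_adj_mult_eq_frobenius_norm_sq:
  assumes "A \<in> carrier_mat n n" "transpose_mat A = A"
  shows "(\<Sum>a<n. \<Sum>b<n. adj A $$ (a,b) * A $$ (a,b)) = complex_of_real (frobenius_norm_sq A)"
proof -
  have "adj A $$ (a,b) * A $$ (a,b) = complex_of_real ((cmod (A $$ (a,b)))\<^sup>2)" if "a < n" "b < n" for a b
  proof -
    have "A $$ (b,a) = A $$ (a,b)"
      using assms that index_transpose_mat(1)[of a A b] by simp
    then show ?thesis
      using assms that by (simp add: index_adj complex_norm_square mult.commute del: of_real_power)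
  qed
  then show ?thesis
    using assms by (simp add: frobenius_norm_sq_def del: of_real_power)
qed

lemma max_corr_eqI:
  assumes le: "\<And>P Q. P \<in> carrier_mat m m \<Longrightarrow> Q \<in> carrier_mat m m \<Longrightarrow> mtrace P = 0 \<Longrightarrow> mtrace Q = 0
      \<Longrightarrow> mtrace (adj P * P) / of_nat m = 1 \<Longrightarrow> mtrace (adj Q * Q) / of_nat m = 1
      \<Longrightarrow> cmod (mtrace (kron (adj P) Q * \<psi>)) \<le> c"
    and "P \<in> carrier_mat m m" "Q \<in> carrier_mat m m" "mtrace P = 0" "mtrace Q = 0"
    and "mtrace (adj P * P) / of_nat m = 1" "mtrace (adj Q * Q) / of_nat m = 1"
    and "cmod (mtrace (kron (adj P) Q * \<psi>)) = c"
  shows "max_corr m \<psi> = c"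
  unfolding max_corr_def
proof (rule cSup_eq_maximum)
  show "c \<in> {cmod (mtrace (kron (adj P) Q * \<psi>)) | P Q.
      P \<in> carrier_mat m m \<and> Q \<in> carrier_mat m m \<and> mtrace P = 0 \<and> mtrace Q = 0 \<and>
      mtrace (adj P * P) / of_nat m = 1 \<and> mtrace (adj Q * Q) / of_nat m = 1}"
    using assms(2-8) by blast
qed (use le in blast)

definition isotropic_state :: "nat \<Rightarrow> real \<Rightarrow> complex mat" where
  "isotropic_state m \<epsilon> = complex_of_real (1 - \<epsilon>) \<cdot>\<^sub>m proj (max_ent m)
     + complex_of_real \<epsilon> \<cdot>\<^sub>m kron ((1 / of_nat m) \<cdot>\<^sub>m 1\<^sub>m m) ((1 / of_nat m) \<cdot>\<^sub>m 1\<^sub>m m)"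

lemma mtrace_kron_adj_mult_isotropic_state:
  assumes "P \<in> carrier_mat m m" "Q \<in> carrier_mat m m" "mtrace P = 0"
  shows "mtrace (kron (adj P) Q * isotropic_state m \<epsilon>)
    = complex_of_real (1 - \<epsilon>) * (\<Sum>a<m. \<Sum>b<m. adj P $$ (a,b) * Q $$ (a,b)) / of_nat m"
proof -
  let ?K = "kron (adj P) Q" and ?\<Psi> = "proj (max_ent m)" and ?c = "1 / of_nat m * (1 / of_nat m)"
  have K: "?K \<in> carrier_mat (m * m) (m * m)"
    using assms by (simp add: kron_carrier_mat adj_carrier_mat)
  have \<Psi>: "?\<Psi> \<in> carrier_mat (m * m) (m * m)"
    by (simp add: proj_def dim_max_ent)
  have "?K * isotropic_state m \<epsilon>
    = ?K * (complex_of_real (1 - \<epsilon>) \<cdot>\<^sub>m ?\<Psi>) + ?K * (complex_of_real \<epsilon> \<cdot>\<^sub>m (?c \<cdot>\<^sub>m 1\<^sub>m (m * m)))"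
    unfolding isotropic_state_def kron_smult_one
    by (rule mult_add_distrib_mat[OF K]) (use \<Psi> in auto)
  also have "\<dots> = complex_of_real (1 - \<epsilon>) \<cdot>\<^sub>m (?K * ?\<Psi>) + complex_of_real \<epsilon> \<cdot>\<^sub>m (?c \<cdot>\<^sub>m ?K)"
    using K by (simp add: mult_smult_distrib[OF K \<Psi>] mult_smult_distrib[OF K one_carrier_mat]
        mult_smult_distrib[OF K smult_carrier_mat[OF one_carrier_mat]] right_mult_one_mat)
  finally have "mtrace (?K * isotropic_state m \<epsilon>)
    = complex_of_real (1 - \<epsilon>) * mtrace (?K * ?\<Psi>) + complex_of_real \<epsilon> * (?c * mtrace ?K)"
    using K \<Psi> by (simp add: mtrace_add[of _ "m * m"] mtrace_smult[of _ "m * m"])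
  also have "mtrace ?K = 0"
    using assms(3) by (simp add: mtrace_kron[OF adj_carrier_mat[OF assms(1)] assms(2)] mtrace_adj[OF assms(1)])
  also have "mtrace (?K * ?\<Psi>) = (\<Sum>a<m. \<Sum>b<m. adj P $$ (a,b) * Q $$ (a,b)) / of_nat m"
    using assms by (simp add: mtrace_kron_mult_proj_max_ent adj_carrier_mat)
  finally show ?thesis
    by simp
qed

lemma cmod_mtrace_kron_adj_mult_isotropic_state:
  assumes "P \<in> carrier_mat m m" "Q \<in> carrier_mat m m" "mtrace P = 0" "\<epsilon> \<le> 1"
  shows "cmod (mtrace (kron (adj P) Q * isotropic_state m \<epsilon>))
    = (1 - \<epsilon>) / m * cmod (\<Sum>a<m. \<Sum>b<m. adj P $$ (a,b) * Q $$ (a,b))"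
  unfolding mtrace_kron_adj_mult_isotropic_state[OF assms(1-3)] norm_divide norm_mult norm_of_real norm_of_nat
  using assms(4) by simp

lemma cmod_mtrace_kron_adj_mult_isotropic_state_le:
  assumes "P \<in> carrier_mat m m" "Q \<in> carrier_mat m m" "mtrace P = 0"
    and "mtrace (adj P * P) / of_nat m = 1" "mtrace (adj Q * Q) / of_nat m = 1"
    and "\<epsilon> \<le> 1"
  shows "cmod (mtrace (kron (adj P) Q * isotropic_state m \<epsilon>)) \<le> 1 - \<epsilon>"
proof -
  have "cmod (\<Sum>a<m. \<Sum>b<m. adj P $$ (a,b) * Q $$ (a,b)) \<le> (frobenius_norm_sq (adj P) + frobenius_norm_sq Q) / 2"
    by (rule cmod_sum_entrywise_mult_le[OF adj_carrier_mat[OF assms(1)] assms(2)])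
  also have "\<dots> = real m"
    using assms by (simp add: frobenius_norm_sq_adj frobenius_norm_sq_eq_if_normalised)
  finally have "(1 - \<epsilon>) / m * cmod (\<Sum>a<m. \<Sum>b<m. adj P $$ (a,b) * Q $$ (a,b)) \<le> (1 - \<epsilon>) / m * m"
    using assms(6) by (intro mult_left_mono) auto
  also have "\<dots> \<le> 1 - \<epsilon>"
    using assms(6) by (cases "m = 0") auto
  finally show ?thesis
    using assms by (simp add: cmod_mtrace_kron_adj_mult_isotropic_state)
qed

lemma cmod_mtrace_kron_adj_mult_isotropic_state_symmetric:
  assumes "P \<in> carrier_mat m m" "mtrace P = 0" "transpose_mat P = P"
    and "mtrace (adj P * P) / of_nat m = 1" "\<epsilon> \<le> 1"
  shows "cmod (mtrace (kron (adj P) P * isotropic_state m \<epsilon>)) = 1 - \<epsilon>"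
proof -
  have "m \<noteq> 0"
    using assms(4) by (cases m) auto
  then show ?thesis
    using assms by (simp add: cmod_mtrace_kron_adj_mult_isotropic_state sum_adj_mult_eq_frobenius_norm_sq
        frobenius_norm_sq_eq_if_normalised)
qed

definition scaled_pauli_z :: "nat \<Rightarrow> complex mat" where
  "scaled_pauli_z m = mat m m (\<lambda>(i,j).
     if i = j \<and> i < 2 then complex_of_real ((-1) ^ i * sqrt (real m / 2)) else 0)"

lemma sum_lessThan_if_less:
  fixes k m :: nat
  assumes "k \<le> m"
  shows "(\<Sum>i<m. if i < k then f i else 0) = (\<Sum>i<k. f i)"
proof -
  have "{i \<in> {..<m}. i < k} = {..<k}"
    using assms by auto
  then show ?thesis
    by (metis finite_lessThan sum.inter_filter)
qed

lemma scaled_pauli_z_properties: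
  assumes "m > 1"
  shows "scaled_pauli_z m \<in> carrier_mat m m" "mtrace (scaled_pauli_z m) = 0"
    and "transpose_mat (scaled_pauli_z m) = scaled_pauli_z m"
    and "mtrace (adj (scaled_pauli_z m) * scaled_pauli_z m) / of_nat m = 1"
proof -
  let ?D = "scaled_pauli_z m" and ?c = "sqrt (real m / 2)"
  show D: "?D \<in> carrier_mat m m"
    by (simp add: scaled_pauli_z_def)
  show "mtrace ?D = 0"
    using assms by (simp add: mtrace_def scaled_pauli_z_def sum_lessThan_if_less numeral_2_eq_2)
  show "transpose_mat ?D = ?D"
    by (rule eq_matI) (auto simp: scaled_pauli_z_def)
  have entry: "(cmod (?D $$ (i,j)))\<^sup>2 = (if j = i then (if i < 2 then ?c\<^sup>2 else 0) else 0)"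
    if "i < m" "j < m" for i j
    using that by (auto simp: scaled_pauli_z_def norm_mult norm_power)
  have dims: "dim_row ?D = m" "dim_col ?D = m"
    using D by auto
  have "frobenius_norm_sq ?D = (\<Sum>i<m. \<Sum>j<m. if j = i then (if i < 2 then ?c\<^sup>2 else 0) else 0)"
    unfolding frobenius_norm_sq_def dims by (intro sum.cong refl) (simp add: entry)
  also have "\<dots> = (\<Sum>i<m. if i < 2 then ?c\<^sup>2 else 0)"
    by (simp add: sum.delta)
  also have "\<dots> = real m"
    using assms by (simp add: sum_lessThan_if_less)
  finally show "mtrace (adj ?D * ?D) / of_nat m = 1"
    using assms by (simp add: mtrace_adj_mult_self[OF D])
qed

theorem lemma3p9:
  fixes \<epsilon> :: real and m :: nat
  assumes "0 \<le> \<epsilon>" and "\<epsilon> < 1" and "m > 1"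
  shows "max_corr m
     (complex_of_real (1 - \<epsilon>) \<cdot>\<^sub>m proj (max_ent m)
      + complex_of_real \<epsilon> \<cdot>\<^sub>m kron ((1 / of_nat m) \<cdot>\<^sub>m 1\<^sub>m m) ((1 / of_nat m) \<cdot>\<^sub>m 1\<^sub>m m))
     = 1 - \<epsilon>"
proof -
  note D = scaled_pauli_z_properties[OF assms(3)]
  have "max_corr m (isotropic_state m \<epsilon>) = 1 - \<epsilon>"
  proof (rule max_corr_eqI[OF _ D(1) D(1) D(2) D(2) D(4) D(4)])
    show "cmod (mtrace (kron (adj P) Q * isotropic_state m \<epsilon>)) \<le> 1 - \<epsilon>"
      if "P \<in> carrier_mat m m" "Q \<in> carrier_mat m m" "mtrace P = 0"
        "mtrace (adj P * P) / of_nat m = 1" "mtrace (adj Q * Q) / of_nat m = 1" for P Q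
      using cmod_mtrace_kron_adj_mult_isotropic_state_le[OF that] assms(2) by simp
    show "cmod (mtrace (kron (adj (scaled_pauli_z m)) (scaled_pauli_z m) * isotropic_state m \<epsilon>)) = 1 - \<epsilon>"
      using cmod_mtrace_kron_adj_mult_isotropic_state_symmetric[OF D(1-4)] assms(2) by simp
  qed
  then show ?thesis
    by (simp add: isotropic_state_def)
qed

end
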